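(* Let $X$ be a real Hilbert space and $Y$ a real reflexive Banach space. Let $F\colon X \to Y$ be a continuous function and let $L > 0$. Then the following are equivalent: (i) $F$ is Fréchet differentiable on $X$ and its derivative $F'\colon X \to \mathcal{B}(X,Y)$ is $L$-Lipschitz continuous, i.e. $\|F'(x) - F'(y)\| \le L\|x-y\|$ for all $x,y \in X$, where the norm on the left is the operator norm; (ii) for every $n \ge 1$, all $x_1,\ldots,x_n \in X$ and all $\lambda_1,\ldots,\lambda_n \ge 0$ with $\sum_{i=1}^n \lambda_i = 1$, $$\Big\| F\Big(\sum_{i=1}^n \lambda_i x_i\Big) - \sum_{i=1}^n \lambda_i F(x_i)\Big\| \le \frac{L}{2}\sum_{1\le i<j\le n} \lambda_i\lambda_j \|x_i - x_j\|^2.$$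
   Context: $\mathcal{B}(X,Y)$ denotes the space of bounded linear operators from $X$ to $Y$, equipped with the operator norm $\|T\| = \sup_{\|x\|\le 1}\|T(x)\|$. The same symbol $\|\cdot\|$ denotes the norms on all the spaces involved. *)

theory Defs
  imports "HOL-Analysis.Analysis"
begin

definition reflexive_space :: "'a::real_normed_vector itself \<Rightarrow> bool" where
  "reflexive_space _ \<longleftrightarrow>
     (\<forall>\<phi> :: ('a \<Rightarrow>\<^sub>L real) \<Rightarrow>\<^sub>L real. \<exists>y::'a. \<forall>f. blinfun_apply \<phi> f = blinfun_apply f y)"

end

theory Submission
  imports Defs
begin

text \<open>
  (i) implies (ii): integrating the Lipschitz bound on F' along a segment gives the remainder
  estimate norm (F p - F q - F' q (p - q)) \<le> L/2 * norm (p - q)^2. Expanding every F (x i) around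
  the barycentre m of the points, the linear terms cancel, and in an inner product space the
  weighted variance \<Sum>i w i * norm (x i - m)^2 equals \<Sum>i<j w i * w j * norm (x i - x j)^2.

  (ii) implies (i): only the case of two points is needed. It makes the difference quotients
  (F (x + t h) - F x) / t Lipschitz in t > 0, so by completeness of Y they converge as t tends
  to 0+ to a directional derivative with quadratic remainder. The two-point inequality at
  midpoints makes this derivative additive, continuity of F makes it bounded, so it is a Frechet
  derivative with remainder at most L/2 * norm (p - q)^2. Comparing the remainders at the four
  points (x + y)/2 \<plusminus> v and x, y, the parallelogram law yields norm (F' x - F' y) \<le> L * norm (x - y).
\<close>

lemma remainder_bound_of_lipschitz_derivative:
  fixes F :: "'a::real_normed_vector \<Rightarrow> 'b::real_normed_vector" and F' :: "'a \<Rightarrow> 'a \<Rightarrow>\<^sub>L 'b"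
  assumes deriv: "\<And>x. (F has_derivative blinfun_apply (F' x)) (at x)"
    and lipschitz: "\<And>x y. norm (F' x - F' y) \<le> L * norm (x - y)"
  shows "norm (F p - F q - F' q (p - q)) \<le> L / 2 * (norm (p - q))\<^sup>2"
proof -
  define h where "h = p - q"
  define g where "g t = F (q + t *\<^sub>R h) - t *\<^sub>R F' q h" for t
  define \<phi> where "\<phi> t = L / 2 * t\<^sup>2 * (norm h)\<^sup>2" for t :: real
  have g_deriv: "(g has_vector_derivative (F' (q + t *\<^sub>R h) h - F' q h)) (at t)" for t
  proof -
    have "((\<lambda>t. F (q + t *\<^sub>R h)) has_derivative (\<lambda>s. F' (q + t *\<^sub>R h) (s *\<^sub>R h))) (at t)"
      by (rule has_derivative_compose[OF _ deriv]) (auto intro!: derivative_eq_intros)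
    then have "(g has_derivative (\<lambda>s. s *\<^sub>R (F' (q + t *\<^sub>R h) h - F' q h))) (at t)"
      unfolding g_def
      by (auto intro!: derivative_eq_intros simp: blinfun.scaleR_right scaleR_diff_right)
    then show ?thesis
      by (simp add: has_vector_derivative_def)
  qed
  have \<phi>_deriv: "(\<phi> has_vector_derivative (L * t * (norm h)\<^sup>2)) (at t)" for t
    unfolding \<phi>_def has_real_derivative_iff_has_vector_derivative[symmetric]
    by (auto intro!: derivative_eq_intros)
  have "norm (F' (q + t *\<^sub>R h) h - F' q h) \<le> L * t * (norm h)\<^sup>2" if "0 < t" for t
  proof -
    have "norm (F' (q + t *\<^sub>R h) h - F' q h) \<le> norm (F' (q + t *\<^sub>R h) - F' q) * norm h"
      by (metis blinfun.diff_left norm_blinfun)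
    also have "\<dots> \<le> L * norm (t *\<^sub>R h) * norm h"
      using lipschitz[of "q + t *\<^sub>R h" q] by (intro mult_right_mono) auto
    finally show ?thesis
      using that by (simp add: power2_eq_square)
  qed
  then have "norm (g 1 - g 0) \<le> \<phi> 1 - \<phi> 0"
    using g_deriv \<phi>_deriv
    by (intro differentiable_bound_general[OF zero_less_one])
      (auto intro!: continuous_at_imp_continuous_on
        has_vector_derivative_continuous[OF g_deriv] has_vector_derivative_continuous[OF \<phi>_deriv])
  then show ?thesis
    unfolding g_def \<phi>_def h_def by (simp add: algebra_simps)
qed

lemma sum_symmetric_eq_twice_sum_lower:
  fixes f :: "nat \<Rightarrow> nat \<Rightarrow> 'a::comm_monoid_add"
  assumes "\<And>i j. f i j = f j i" and "\<And>i. f i i = 0"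
  shows "(\<Sum>i<n. \<Sum>j<n. f i j) = (\<Sum>j<n. \<Sum>i<j. f i j) + (\<Sum>j<n. \<Sum>i<j. f i j)"
proof (induction n)
  case (Suc n)
  have "(\<Sum>j<n. f n j) = (\<Sum>i<n. f i n)"
    using assms(1) by simp
  with Suc show ?case
    by (simp add: sum.distrib assms(2) ac_simps)
qed simp

lemma weighted_pairwise_sqdist_eq_variance:
  fixes x :: "nat \<Rightarrow> 'a::real_inner" and w :: "nat \<Rightarrow> real"
  assumes "(\<Sum>i<n. w i) = 1"
  shows "(\<Sum>j<n. \<Sum>i<j. w i * w j * (norm (x i - x j))\<^sup>2)
       = (\<Sum>i<n. w i * (norm (x i - (\<Sum>k<n. w k *\<^sub>R x k)))\<^sup>2)"
proof -
  define y where "y i = x i - (\<Sum>k<n. w k *\<^sub>R x k)" for i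
  define V where "V = (\<Sum>i<n. w i * (norm (y i))\<^sup>2)"
  have "(\<Sum>i<n. \<Sum>j<n. w i * w j * inner (y i) (y j)) = inner (\<Sum>i<n. w i *\<^sub>R y i) (\<Sum>j<n. w j *\<^sub>R y j)"
    by (subst inner_sum_left) (simp add: inner_sum_right sum_distrib_left mult_ac)
  also have "(\<Sum>i<n. w i *\<^sub>R y i) = 0"
    using assms by (simp add: y_def scaleR_diff_right sum_subtractf flip: scaleR_sum_left)
  finally have cross: "(\<Sum>i<n. \<Sum>j<n. w i * w j * inner (y i) (y j)) = 0"
    by simp
  have diag_right: "(\<Sum>i<n. \<Sum>j<n. w i * w j * (norm (y j))\<^sup>2) = V"
    using assms by (simp add: V_def mult.assoc flip: sum_distrib_left sum_distrib_right)
  have diag_left: "(\<Sum>i<n. \<Sum>j<n. w i * w j * (norm (y i))\<^sup>2) = V"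
    using diag_right by (subst sum.swap) (simp add: mult.commute)
  have pointwise: "w i * w j * (norm (x i - x j))\<^sup>2
      = w i * w j * (norm (y i))\<^sup>2 + w i * w j * (norm (y j))\<^sup>2 - 2 * (w i * w j * inner (y i) (y j))"
    for i j
  proof -
    have "w i * w j * (norm (x i - x j))\<^sup>2 = w i * w j * (norm (y i - y j))\<^sup>2"
      by (simp add: y_def)
    also have "\<dots> = w i * w j * (norm (y i))\<^sup>2 + w i * w j * (norm (y j))\<^sup>2 - 2 * (w i * w j * inner (y i) (y j))"
      by (simp add: power2_norm_eq_inner inner_commute algebra_simps)
    finally show ?thesis .
  qed
  have "(\<Sum>i<n. \<Sum>j<n. w i * w j * (norm (x i - x j))\<^sup>2)
      = (\<Sum>i<n. \<Sum>j<n. w i * w j * (norm (y i))\<^sup>2) + (\<Sum>i<n. \<Sum>j<n. w i * w j * (norm (y j))\<^sup>2)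
        - 2 * (\<Sum>i<n. \<Sum>j<n. w i * w j * inner (y i) (y j))"
    by (simp add: pointwise sum.distrib sum_subtractf sum_distrib_left)
  then have "(\<Sum>i<n. \<Sum>j<n. w i * w j * (norm (x i - x j))\<^sup>2) = 2 * V"
    by (simp add: diag_left diag_right cross)
  moreover have "(\<Sum>i<n. \<Sum>j<n. w i * w j * (norm (x i - x j))\<^sup>2)
      = (\<Sum>j<n. \<Sum>i<j. w i * w j * (norm (x i - x j))\<^sup>2) + (\<Sum>j<n. \<Sum>i<j. w i * w j * (norm (x i - x j))\<^sup>2)"
    by (rule sum_symmetric_eq_twice_sum_lower) (simp_all add: norm_minus_commute)
  ultimately show ?thesis
    by (simp add: V_def y_def)
qed

lemma norm_convex_combination_defect_le:
  fixes F :: "'a::real_inner \<Rightarrow> 'b::real_normed_vector" and F' :: "'a \<Rightarrow> 'a \<Rightarrow>\<^sub>L 'b"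
    and x :: "nat \<Rightarrow> 'a" and w :: "nat \<Rightarrow> real"
  assumes remainder: "\<And>p q. norm (F p - F q - F' q (p - q)) \<le> K * (norm (p - q))\<^sup>2"
    and nonneg: "\<And>i. i < n \<Longrightarrow> 0 \<le> w i" and sum_one: "(\<Sum>i<n. w i) = 1"
  shows "norm (F (\<Sum>i<n. w i *\<^sub>R x i) - (\<Sum>i<n. w i *\<^sub>R F (x i)))
           \<le> K * (\<Sum>j<n. \<Sum>i<j. w i * w j * (norm (x i - x j))\<^sup>2)"
proof -
  define m where "m = (\<Sum>i<n. w i *\<^sub>R x i)"
  define r where "r i = F (x i) - F m - F' m (x i - m)" for i
  have "(\<Sum>i<n. w i *\<^sub>R F' m (x i - m)) = F' m (\<Sum>i<n. w i *\<^sub>R (x i - m))"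
    by (simp add: blinfun.sum_right blinfun.scaleR_right)
  also have "\<dots> = 0"
    using sum_one by (simp add: m_def scaleR_diff_right sum_subtractf flip: scaleR_sum_left)
  finally have "(\<Sum>i<n. w i *\<^sub>R r i) = (\<Sum>i<n. w i *\<^sub>R F (x i)) - F m"
    using sum_one by (simp add: r_def scaleR_diff_right sum_subtractf flip: scaleR_sum_left)
  then have "norm (F m - (\<Sum>i<n. w i *\<^sub>R F (x i))) = norm (\<Sum>i<n. w i *\<^sub>R r i)"
    by (simp add: norm_minus_commute)
  also have "\<dots> \<le> (\<Sum>i<n. w i * (K * (norm (x i - m))\<^sup>2))"
    using nonneg remainder[of "x _" m]
    by (intro order.trans[OF norm_sum] sum_mono) (simp add: r_def mult_left_mono)
  also have "\<dots> = K * (\<Sum>j<n. \<Sum>i<j. w i * w j * (norm (x i - x j))\<^sup>2)"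
    using weighted_pairwise_sqdist_eq_variance[OF sum_one, of x]
    by (simp add: m_def sum_distrib_left mult_ac)
  finally show ?thesis
    by (simp add: m_def)
qed

lemma has_derivative_of_quadratic_remainder:
  fixes F :: "'a::real_normed_vector \<Rightarrow> 'b::real_normed_vector"
  assumes "bounded_linear T"
    and remainder: "\<And>h. norm (F (x + h) - F x - T h) \<le> K * (norm h)\<^sup>2"
  shows "(F has_derivative T) (at x)"
proof (rule has_derivativeI_sandwich[OF zero_less_one \<open>bounded_linear T\<close>])
  show "norm (F y - F x - T (y - x)) / norm (y - x) \<le> K * norm (y - x)" if "y \<noteq> x" for y
    using remainder[of "y - x"] that by (simp add: divide_le_eq power2_eq_square)
  show "((\<lambda>y. K * norm (y - x)) \<longlongrightarrow> 0) (at x)"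
    by (intro tendsto_mult_right_zero tendsto_norm_zero LIM_zero tendsto_ident_at)
qed

lemma derivative_diff_bound_of_quadratic_remainder:
  fixes F :: "'a::real_inner \<Rightarrow> 'b::real_normed_vector" and F' :: "'a \<Rightarrow> 'a \<Rightarrow>\<^sub>L 'b"
  assumes remainder: "\<And>p q. norm (F p - F q - F' q (p - q)) \<le> K * (norm (p - q))\<^sup>2"
  shows "2 * norm ((F' x - F' y) v) \<le> K * (norm (x - y))\<^sup>2 + 4 * K * (norm v)\<^sup>2"
proof -
  define r where "r p q = F p - F q - F' q (p - q)" for p q
  define a where "a = (1/2) *\<^sub>R (x - y)"
  define z where "z = y + a + v"
  define z' where "z' = y + a - v"
  have x_eq: "x = y + a + a"
    by (simp add: a_def algebra_simps flip: scaleR_add_left)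
  have parallelogram: "(norm (a + v))\<^sup>2 + (norm (a - v))\<^sup>2 = 2 * (norm a)\<^sup>2 + 2 * (norm v)\<^sup>2"
    by (simp add: power2_norm_eq_inner inner_add inner_diff inner_commute)
  have "(F' x - F' y) (2 *\<^sub>R v) = r z y - r z x + r z' x - r z' y"
    by (simp add: r_def z_def z'_def x_eq blinfun.diff_left blinfun.diff_right blinfun.add_right
        blinfun.minus_right scaleR_2 algebra_simps)
  then have "2 * norm ((F' x - F' y) v) = norm (r z y - r z x + r z' x - r z' y)"
    by (metis blinfun.scaleR_right norm_scaleR abs_numeral)
  also have "\<dots> \<le> norm (r z y) + norm (r z x) + norm (r z' x) + norm (r z' y)"
    by (smt (verit) norm_triangle_ineq norm_triangle_ineq4)
  also have "\<dots> \<le> K * (norm (z - y))\<^sup>2 + K * (norm (z - x))\<^sup>2 + K * (norm (z' - x))\<^sup>2 + K * (norm (z' - y))\<^sup>2"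
    unfolding r_def by (intro add_mono remainder)
  also have "\<dots> = 2 * K * ((norm (a + v))\<^sup>2 + (norm (a - v))\<^sup>2)"
  proof -
    have "z - y = a + v" "z - x = - (a - v)" "z' - x = - (a + v)" "z' - y = a - v"
      by (simp_all add: z_def z'_def x_eq algebra_simps)
    then show ?thesis
      by (simp only: norm_minus_cancel) (simp add: algebra_simps)
  qed
  also have "\<dots> = K * (norm (x - y))\<^sup>2 + 4 * K * (norm v)\<^sup>2"
  proof -
    have "norm a = norm (x - y) / 2"
      by (simp add: a_def)
    then show ?thesis
      unfolding parallelogram by (simp add: power2_eq_square algebra_simps)
  qed
  finally show ?thesis .
qed

lemma lipschitz_derivative_of_quadratic_remainder:
  fixes F :: "'a::real_inner \<Rightarrow> 'b::real_normed_vector" and F' :: "'a \<Rightarrow> 'a \<Rightarrow>\<^sub>L 'b"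
  assumes remainder: "\<And>p q. norm (F p - F q - F' q (p - q)) \<le> K * (norm (p - q))\<^sup>2"
  shows "norm (F' x - F' y) \<le> 2 * K * norm (x - y)"
proof (cases "x = y")
  case False
  have "0 \<le> K * (norm (x - y))\<^sup>2"
    using order.trans[OF norm_ge_zero remainder[of x y]] .
  with False have "0 \<le> K"
    by (simp add: zero_le_mult_iff)
  show ?thesis
  proof (rule norm_blinfun_bound)
    show "0 \<le> 2 * K * norm (x - y)"
      using \<open>0 \<le> K\<close> by simp
    fix u
    show "norm ((F' x - F' y) u) \<le> 2 * K * norm (x - y) * norm u"
    proof (cases "u = 0")
      case False
      \<comment> \<open>this choice makes both terms of the bound equal\<close>
      define s where "s = norm (x - y) / (2 * norm u)"
      have "0 < s"
        using False \<open>x \<noteq> y\<close> by (simp add: s_def)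
      have "2 * s * norm ((F' x - F' y) u) \<le> K * (norm (x - y))\<^sup>2 + 4 * K * (norm (s *\<^sub>R u))\<^sup>2"
        using derivative_diff_bound_of_quadratic_remainder[OF remainder, of x y "s *\<^sub>R u"] \<open>0 < s\<close>
        by (simp add: blinfun.scaleR_right)
      also have "\<dots> = 2 * s * (2 * K * norm (x - y) * norm u)"
        using False by (simp add: s_def power2_eq_square field_simps)
      finally show ?thesis
        by (rule mult_left_le_imp_le) (use \<open>0 < s\<close> in simp)
    qed simp
  qed
qed simp

locale quadratic_affine_defect =
  fixes F :: "'a::real_normed_vector \<Rightarrow> 'b::banach" and K :: real
  assumes K_nonneg: "0 \<le> K"
    and affine_defect: "\<And>a b l. 0 \<le> l \<Longrightarrow> l \<le> 1 \<Longrightarrow>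
      norm (F (l *\<^sub>R a + (1 - l) *\<^sub>R b) - (l *\<^sub>R F a + (1 - l) *\<^sub>R F b))
        \<le> K * l * (1 - l) * (norm (a - b))\<^sup>2"
begin

definition difference_quotient :: "'a \<Rightarrow> 'a \<Rightarrow> real \<Rightarrow> 'b" where
  "difference_quotient x h t = (1 / t) *\<^sub>R (F (x + t *\<^sub>R h) - F x)"

definition dir_deriv :: "'a \<Rightarrow> 'a \<Rightarrow> 'b" where
  "dir_deriv x h = Lim (at_right 0) (difference_quotient x h)"

lemma difference_quotient_diff_le:
  assumes "0 < s" "s \<le> t"
  shows "norm (difference_quotient x h s - difference_quotient x h t) \<le> K * (t - s) * (norm h)\<^sup>2"
proof -
  define l where "l = s / t"
  have "0 \<le> l" "l \<le> 1"
    using assms by (auto simp: l_def)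
  have "l *\<^sub>R (x + t *\<^sub>R h) + (1 - l) *\<^sub>R x = x + s *\<^sub>R h"
    using assms by (simp add: l_def algebra_simps)
  moreover have "s *\<^sub>R (difference_quotient x h s - difference_quotient x h t)
      = F (x + s *\<^sub>R h) - (l *\<^sub>R F (x + t *\<^sub>R h) + (1 - l) *\<^sub>R F x)"
    using assms by (simp add: difference_quotient_def l_def algebra_simps)
  ultimately have "s * norm (difference_quotient x h s - difference_quotient x h t)
      \<le> K * l * (1 - l) * (norm ((x + t *\<^sub>R h) - x))\<^sup>2"
    using affine_defect[OF \<open>0 \<le> l\<close> \<open>l \<le> 1\<close>, of "x + t *\<^sub>R h" x] assms
    by (metis abs_of_pos norm_scaleR)
  also have "\<dots> = s * (K * (t - s) * (norm h)\<^sup>2)"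
    using assms by (simp add: l_def power2_eq_square field_simps)
  finally show ?thesis
    by (rule mult_left_le_imp_le) (use assms in simp)
qed

lemma lipschitz_on_difference_quotient:
  "(K * (norm h)\<^sup>2)-lipschitz_on {0<..} (difference_quotient x h)"
proof (rule lipschitz_onI)
  have "dist (difference_quotient x h s) (difference_quotient x h t) \<le> K * (norm h)\<^sup>2 * dist s t"
    if "0 < s" "s \<le> t" for s t
    using difference_quotient_diff_le[OF that, of x h] that by (simp add: dist_norm mult_ac)
  then show "dist (difference_quotient x h s) (difference_quotient x h t) \<le> K * (norm h)\<^sup>2 * dist s t"
    if "s \<in> {0<..}" "t \<in> {0<..}" for s t
    using that by (metis dist_commute greaterThan_iff nle_le)
qed (simp add: K_nonneg)

lemma difference_quotient_tendsto: "(difference_quotient x h \<longlongrightarrow> dir_deriv x h) (at_right 0)"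
proof -
  obtain D where "(difference_quotient x h \<longlongrightarrow> D) (at_right 0)"
    using uniformly_continuous_on_extension_at_closure[OF
        lipschitz_on_uniformly_continuous[OF lipschitz_on_difference_quotient], of 0]
    by auto
  then show ?thesis
    by (simp add: dir_deriv_def tendsto_Lim)
qed

lemma dir_deriv_remainder:
  assumes "0 \<le> t"
  shows "norm (F (x + t *\<^sub>R h) - F x - t *\<^sub>R dir_deriv x h) \<le> K * t\<^sup>2 * (norm h)\<^sup>2"
proof (cases "t = 0")
  case False
  with assms have "0 < t"
    by simp
  have "norm (difference_quotient x h t - dir_deriv x h) \<le> K * t * (norm h)\<^sup>2"
  proof (rule Lim_norm_ubound)
    show "((\<lambda>s. difference_quotient x h t - difference_quotient x h s)
        \<longlongrightarrow> difference_quotient x h t - dir_deriv x h) (at_right 0)"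
      by (intro tendsto_intros difference_quotient_tendsto)
    have "norm (difference_quotient x h t - difference_quotient x h s) \<le> K * t * (norm h)\<^sup>2"
      if "0 < s" "s < t" for s
    proof -
      have "K * (t - s) * (norm h)\<^sup>2 \<le> K * t * (norm h)\<^sup>2"
        using that K_nonneg by (intro mult_right_mono mult_left_mono) auto
      then show ?thesis
        using difference_quotient_diff_le[of s t x h] that by (simp add: norm_minus_commute)
    qed
    then show "\<forall>\<^sub>F s in at_right 0. norm (difference_quotient x h t - difference_quotient x h s)
        \<le> K * t * (norm h)\<^sup>2"
      using \<open>0 < t\<close> by (intro eventually_at_rightI[of 0 t]) auto
  qed simp
  moreover have "F (x + t *\<^sub>R h) - F x - t *\<^sub>R dir_deriv x h
      = t *\<^sub>R (difference_quotient x h t - dir_deriv x h)"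
    using \<open>0 < t\<close> by (simp add: difference_quotient_def algebra_simps)
  ultimately show ?thesis
    using \<open>0 < t\<close> by (simp add: power2_eq_square mult_left_mono mult_ac)
qed simp

lemma dir_deriv_eqI:
  assumes "\<And>t. 0 < t \<Longrightarrow> norm (F (x + t *\<^sub>R h) - F x - t *\<^sub>R D) \<le> M * t\<^sup>2"
  shows "dir_deriv x h = D"
proof -
  have bound: "norm (difference_quotient x h t - D) \<le> M * t" if "0 < t" for t
  proof -
    have "F (x + t *\<^sub>R h) - F x - t *\<^sub>R D = t *\<^sub>R (difference_quotient x h t - D)"
      using that by (simp add: difference_quotient_def algebra_simps)
    then show ?thesis
      using assms[OF that] that by (simp add: power2_eq_square)
  qed
  then have "\<forall>\<^sub>F t in at_right 0. norm (difference_quotient x h t - D) \<le> M * t"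
    by (intro eventually_at_rightI[of 0 1]) auto
  moreover have "((\<lambda>t. M * t) \<longlongrightarrow> 0) (at_right 0)"
    by (intro tendsto_mult_right_zero tendsto_ident_at)
  ultimately have "((\<lambda>t. difference_quotient x h t - D) \<longlongrightarrow> 0) (at_right 0)"
    by (rule Lim_null_comparison)
  then have "(difference_quotient x h \<longlongrightarrow> D) (at_right 0)"
    by (simp add: Lim_null[symmetric])
  then show ?thesis
    using difference_quotient_tendsto tendsto_unique trivial_limit_at_right_real by blast
qed

lemma dir_deriv_zero: "dir_deriv x 0 = 0"
  by (rule dir_deriv_eqI[where M = 0]) simp

lemma dir_deriv_scaleR_pos:
  assumes "0 < c"
  shows "dir_deriv x (c *\<^sub>R h) = c *\<^sub>R dir_deriv x h"
proof (rule dir_deriv_eqI[where M = "K * c\<^sup>2 * (norm h)\<^sup>2"])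
  fix t :: real
  assume "0 < t"
  then show "norm (F (x + t *\<^sub>R c *\<^sub>R h) - F x - t *\<^sub>R c *\<^sub>R dir_deriv x h) \<le> K * c\<^sup>2 * (norm h)\<^sup>2 * t\<^sup>2"
    using dir_deriv_remainder[of "t * c" x h] assms by (simp add: power_mult_distrib mult_ac)
qed

lemma dir_deriv_midpoint:
  "dir_deriv x ((1/2) *\<^sub>R (h + k)) = (1/2) *\<^sub>R (dir_deriv x h + dir_deriv x k)"
proof (rule dir_deriv_eqI[where M = "K * ((norm (h - k))\<^sup>2 / 4 + (norm h)\<^sup>2 / 2 + (norm k)\<^sup>2 / 2)"])
  fix t :: real
  assume "0 < t"
  define e where "e u = F (x + t *\<^sub>R u) - F x - t *\<^sub>R dir_deriv x u" for u
  define d where "d = F ((1/2) *\<^sub>R (x + t *\<^sub>R h) + (1 - 1/2) *\<^sub>R (x + t *\<^sub>R k))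
      - ((1/2) *\<^sub>R F (x + t *\<^sub>R h) + (1 - 1/2) *\<^sub>R F (x + t *\<^sub>R k))"
  have "norm d \<le> K / 4 * t\<^sup>2 * (norm (h - k))\<^sup>2"
    using affine_defect[of "1/2" "x + t *\<^sub>R h" "x + t *\<^sub>R k"] \<open>0 < t\<close>
    by (simp add: d_def power_mult_distrib flip: scaleR_diff_right)
  moreover have "norm (e h) \<le> K * t\<^sup>2 * (norm h)\<^sup>2" "norm (e k) \<le> K * t\<^sup>2 * (norm k)\<^sup>2"
    using \<open>0 < t\<close> by (simp_all add: e_def dir_deriv_remainder)
  moreover have "F (x + t *\<^sub>R (1/2) *\<^sub>R (h + k)) - F x - t *\<^sub>R (1/2) *\<^sub>R (dir_deriv x h + dir_deriv x k)
      = d + (1/2) *\<^sub>R e h + (1/2) *\<^sub>R e k"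
  proof -
    have mid: "(1/2) *\<^sub>R (x + t *\<^sub>R h) + (1 - 1/2) *\<^sub>R (x + t *\<^sub>R k) = x + t *\<^sub>R (1/2) *\<^sub>R (h + k)"
      by (simp add: algebra_simps flip: scaleR_add_left)
    show ?thesis
      unfolding d_def e_def mid by (simp add: algebra_simps) (simp flip: add.assoc scaleR_add_left)
  qed
  moreover have "norm (d + (1/2) *\<^sub>R e h + (1/2) *\<^sub>R e k) \<le> norm d + norm (e h) / 2 + norm (e k) / 2"
    using norm_triangle_ineq[of "d + (1/2) *\<^sub>R e h" "(1/2) *\<^sub>R e k"] norm_triangle_ineq[of d "(1/2) *\<^sub>R e h"]
    by simp
  ultimately show "norm (F (x + t *\<^sub>R (1/2) *\<^sub>R (h + k)) - F x - t *\<^sub>R (1/2) *\<^sub>R (dir_deriv x h + dir_deriv x k))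
      \<le> K * ((norm (h - k))\<^sup>2 / 4 + (norm h)\<^sup>2 / 2 + (norm k)\<^sup>2 / 2) * t\<^sup>2"
    by (simp add: algebra_simps)
qed

lemma dir_deriv_uminus: "dir_deriv x (- h) = - dir_deriv x h"
  using dir_deriv_midpoint[of x h "- h"] by (simp add: dir_deriv_zero eq_neg_iff_add_eq_0 add.commute)

lemma dir_deriv_scaleR: "dir_deriv x (c *\<^sub>R h) = c *\<^sub>R dir_deriv x h"
proof -
  consider "0 < c" | "c = 0" | "c < 0"
    by linarith
  then show ?thesis
  proof cases
    case 3
    then show ?thesis
      using dir_deriv_scaleR_pos[of "- c" x h] dir_deriv_uminus[of x "(- c) *\<^sub>R h"] by simp
  qed (simp_all add: dir_deriv_scaleR_pos dir_deriv_zero)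
qed

lemma dir_deriv_add: "dir_deriv x (h + k) = dir_deriv x h + dir_deriv x k"
  using dir_deriv_midpoint[of x h k] dir_deriv_scaleR[of x 2 "(1/2) *\<^sub>R (h + k)"] by simp

lemma bounded_linear_dir_deriv:
  assumes "isCont F x"
  shows "bounded_linear (dir_deriv x)"
proof -
  obtain d where "0 < d" and d: "\<And>z. dist z x < d \<Longrightarrow> dist (F z) (F x) < 1"
    using assms unfolding continuous_at_eps_delta by (meson zero_less_one)
  define r where "r = d / 2"
  have "0 < r"
    using \<open>0 < d\<close> by (simp add: r_def)
  have sphere: "norm (dir_deriv x u) \<le> 1 + K * r\<^sup>2" if "norm u = r" for u
  proof -
    have "norm (dir_deriv x u) \<le> norm (F (x + u) - F x) + norm (F (x + u) - F x - dir_deriv x u)"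
      using norm_triangle_ineq4[of "F (x + u) - F x" "F (x + u) - F x - dir_deriv x u"] by simp
    also have "\<dots> \<le> 1 + K * r\<^sup>2"
      using d[of "x + u"] dir_deriv_remainder[of 1 x u] that \<open>0 < d\<close>
      by (intro add_mono) (simp_all add: dist_norm r_def)
    finally show ?thesis .
  qed
  show ?thesis
  proof (rule bounded_linear_intro[where K = "(1 + K * r\<^sup>2) / r"])
    show "norm (dir_deriv x h) \<le> norm h * ((1 + K * r\<^sup>2) / r)" for h
    proof (cases "h = 0")
      case False
      have "dir_deriv x h = (norm h / r) *\<^sub>R dir_deriv x ((r / norm h) *\<^sub>R h)"
        using False \<open>0 < r\<close> by (simp add: dir_deriv_scaleR)
      moreover have "norm (dir_deriv x ((r / norm h) *\<^sub>R h)) \<le> 1 + K * r\<^sup>2"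
        using False \<open>0 < r\<close> by (intro sphere) simp
      ultimately show ?thesis
        using \<open>0 < r\<close> by (simp add: mult_left_mono divide_right_mono)
    qed (simp add: dir_deriv_zero)
  qed (simp_all add: dir_deriv_add dir_deriv_scaleR)
qed

lemma has_derivative_dir_deriv:
  assumes "isCont F x"
  shows "(F has_derivative dir_deriv x) (at x)"
  using dir_deriv_remainder[of 1 x]
  by (intro has_derivative_of_quadratic_remainder[OF bounded_linear_dir_deriv[OF assms]]) simp

lemma exists_derivative_with_quadratic_remainder:
  assumes "continuous_on UNIV F"
  obtains F' :: "'a \<Rightarrow> 'a \<Rightarrow>\<^sub>L 'b"
  where "\<And>x. (F has_derivative F' x) (at x)"
    and "\<And>p q. norm (F p - F q - F' q (p - q)) \<le> K * (norm (p - q))\<^sup>2"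
proof
  have "isCont F x" for x
    using assms by (simp add: continuous_on_eq_continuous_at)
  then have F'_eq: "blinfun_apply (Blinfun (dir_deriv x)) = dir_deriv x" for x
    by (simp add: bounded_linear_Blinfun_apply bounded_linear_dir_deriv)
  show "(F has_derivative Blinfun (dir_deriv x)) (at x)" for x
    unfolding F'_eq by (rule has_derivative_dir_deriv) fact
  show "norm (F p - F q - Blinfun (dir_deriv q) (p - q)) \<le> K * (norm (p - q))\<^sup>2" for p q
    using dir_deriv_remainder[of 1 q "p - q"] by (simp add: F'_eq)
qed

end

theorem theorem1p2:
  fixes F :: "'a::{real_inner, complete_space} \<Rightarrow> 'b::banach"
    and L :: real
  assumes reflY: "reflexive_space TYPE('b)"
    and contF: "continuous_on UNIV F"
    and Lpos: "L > 0"
  shows "(\<exists>F' :: 'a \<Rightarrow> ('a \<Rightarrow>\<^sub>L 'b).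
            (\<forall>x. (F has_derivative blinfun_apply (F' x)) (at x)) \<and>
            (\<forall>x y. norm (F' x - F' y) \<le> L * norm (x - y)))
     \<longleftrightarrow>
         (\<forall>(n::nat) (x::nat \<Rightarrow> 'a) (w::nat \<Rightarrow> real).
            n \<ge> 1 \<longrightarrow> (\<forall>i<n. w i \<ge> 0) \<longrightarrow> (\<Sum>i<n. w i) = 1 \<longrightarrow>
            norm (F (\<Sum>i<n. w i *\<^sub>R x i) - (\<Sum>i<n. w i *\<^sub>R F (x i)))
              \<le> L / 2 * (\<Sum>j<n. \<Sum>i<j. w i * w j * (norm (x i - x j))\<^sup>2))"
    (is "?derivative \<longleftrightarrow> ?convex_defect")
proof
  assume ?derivative
  then obtain F' :: "'a \<Rightarrow> 'a \<Rightarrow>\<^sub>L 'b"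
    where "\<And>x. (F has_derivative F' x) (at x)" and "\<And>x y. norm (F' x - F' y) \<le> L * norm (x - y)"
    by blast
  then have "norm (F p - F q - F' q (p - q)) \<le> L / 2 * (norm (p - q))\<^sup>2" for p q
    by (rule remainder_bound_of_lipschitz_derivative)
  then show ?convex_defect
    using norm_convex_combination_defect_le by blast
next
  assume ?convex_defect
  have "quadratic_affine_defect F (L / 2)"
  proof
    show "0 \<le> L / 2"
      using Lpos by simp
    show "norm (F (l *\<^sub>R a + (1 - l) *\<^sub>R b) - (l *\<^sub>R F a + (1 - l) *\<^sub>R F b))
        \<le> L / 2 * l * (1 - l) * (norm (a - b))\<^sup>2" if "0 \<le> l" "l \<le> 1" for a b l
      using \<open>?convex_defect\<close>[rule_format, of 2 "\<lambda>i. if i = 0 then l else 1 - l" "\<lambda>i. if i = 0 then a else b"] that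
      by (simp add: numeral_2_eq_2 mult_ac)
  qed
  then obtain F' :: "'a \<Rightarrow> 'a \<Rightarrow>\<^sub>L 'b" where "\<And>x. (F has_derivative F' x) (at x)"
    and remainder: "\<And>p q. norm (F p - F q - F' q (p - q)) \<le> L / 2 * (norm (p - q))\<^sup>2"
    using quadratic_affine_defect.exists_derivative_with_quadratic_remainder[OF _ contF] by blast
  moreover have "norm (F' x - F' y) \<le> L * norm (x - y)" for x y
    using lipschitz_derivative_of_quadratic_remainder[OF remainder, of x y] by simp
  ultimately show ?derivative
    by blast
qed

end
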